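(* Let $\mathcal{AF}_{\vdash}=(\vdash,\overline{\cdot},\widehat{\cdot})$ be a setting such that $\vdash$ satisfies Cut and $\widehat{\cdot}$ is pointed. Let $\mathcal{S}\subseteq\mathcal{L}$ and $\phi\in\mathcal{L}$ with $\mathcal{S}\mathrel{\mid\!\sim}^{\mathcal{AF}_{\vdash}}_{\mathsf{Grd}}\phi$. Then: (1) there is an argument $(\Phi,\phi)\in\mathsf{Grd}(\mathcal{AF}_{\vdash}(\mathcal{S}))$; (2) $\mathsf{Grd}(\mathcal{AF}_{\vdash}(\mathcal{S}))\subseteq\mathsf{Grd}(\mathcal{AF}_{\vdash^{+\phi}}(\mathcal{S}))$; (3) $\mathsf{Grd}(\mathcal{AF}_{\vdash^{+\phi}}(\mathcal{S}))\cap\mathit{Arg}_{\vdash}(\mathcal{S})=\mathsf{Grd}(\mathcal{AF}_{\vdash}(\mathcal{S}))$; (4) with $\Phi$ as in (1), for every $a=(\Gamma,\gamma)\in\mathsf{Grd}(\mathcal{AF}_{\vdash^{+\phi}}(\mathcal{S}))\setminus\mathit{Arg}_{\vdash}(\mathcal{S})$ we have $(\Gamma\cup\Phi,\gamma)\in\mathsf{Grd}(\mathcal{AF}_{\vdash}(\mathcal{S}))$.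
   Context: $\mathcal{L}$ is a set of formulas, $\wp_{\sf fin}(X)$ the finite subsets of $X$. A setting is $(\vdash,\overline{\cdot},\widehat{\cdot})$ with ${\vdash}\subseteq\wp_{\sf fin}(\mathcal{L})\times\mathcal{L}$ arbitrary, $\overline{\cdot}:\mathcal{L}\to\wp(\mathcal{L})$, $\widehat{\cdot}$ assigning to each nonempty finite set of formulas a finite set of formulas, with $\widehat{\emptyset}=\emptyset$. $\mathit{Arg}_{\vdash}(\mathcal{S})=\{(\Gamma,\gamma):\Gamma\subseteq\mathcal{S}\text{ finite},\Gamma\vdash\gamma\}$; in $\mathcal{AF}_{\vdash}(\mathcal{S})$, $(\Gamma,\gamma)$ attacks $(\Gamma',\gamma')$ iff $\gamma\in\overline{\psi}$ for some $\psi\in\widehat{\Gamma'}$. A complete extension is a conflict-free set of arguments that defends each member (every attacker of a member is attacked by a member) and contains every argument it defends; $\mathsf{Grd}(\mathcal{AF}_{\vdash}(\mathcal{S}))$ is the $\subseteq$-minimal complete extension. $\mathcal{S}\mathrel{\mid\!\sim}^{\mathcal{AF}_{\vdash}}_{\mathsf{Grd}}\phi$ iff the grounded extension contains an argument with conclusion $\phi$. $\vdash^{+\phi}$ is the transitive closure of ${\vdash}\cup\{(\emptyset,\phi)\}$ and $\mathcal{AF}_{\vdash^{+\phi}}=(\vdash^{+\phi},\overline{\cdot},\widehat{\cdot})$. $\vdash$ satisfies Cut iff for every $\phi\in\mathcal{L}$ and all finite $\Gamma,\Delta$ and $\gamma$: if $\Gamma\vdash\phi$ and $\Delta\vdash^{+\phi}\gamma$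 then $\Gamma\cup\Delta\vdash\gamma$. $\widehat{\cdot}$ is pointed iff $\widehat{\Gamma\cup\Delta}=\widehat{\Gamma}\cup\widehat{\Delta}$ for all finite $\Gamma,\Delta$. *)

theory Defs
  imports Main
begin

type_synonym 'f crel = "'f set \<Rightarrow> 'f \<Rightarrow> bool"
type_synonym 'f arg = "'f set \<times> 'f"

inductive tclos :: "'f crel \<Rightarrow> 'f crel" for R :: "'f crel" where
  base: "R \<Gamma> \<gamma> \<Longrightarrow> tclos R \<Gamma> \<gamma>"
| chain: "tclos R \<Gamma> \<psi> \<Longrightarrow> tclos R \<Delta> \<gamma> \<Longrightarrow> \<psi> \<in> \<Delta> \<Longrightarrow> tclos R (\<Gamma> \<union> (\<Delta> - {\<psi>})) \<gamma>"

definition plus_rel :: "'f crel \<Rightarrow> 'f \<Rightarrow> 'f crel" where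
  "plus_rel R \<phi> = tclos (\<lambda>\<Gamma> \<gamma>. R \<Gamma> \<gamma> \<or> (\<Gamma> = {} \<and> \<gamma> = \<phi>))"

definition cut_prop :: "'f crel \<Rightarrow> bool" where
  "cut_prop R \<longleftrightarrow> (\<forall>\<phi> \<Gamma> \<Delta> \<gamma>. finite \<Gamma> \<longrightarrow> finite \<Delta> \<longrightarrow>
      R \<Gamma> \<phi> \<longrightarrow> plus_rel R \<phi> \<Delta> \<gamma> \<longrightarrow> R (\<Gamma> \<union> \<Delta>) \<gamma>)"

definition pointed :: "('f set \<Rightarrow> 'f set) \<Rightarrow> bool" where
  "pointed hat \<longleftrightarrow> (\<forall>\<Gamma> \<Delta>. finite \<Gamma> \<longrightarrow> finite \<Delta> \<longrightarrow> hat (\<Gamma> \<union> \<Delta>) = hat \<Gamma> \<union> hat \<Delta>)"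

definition setting :: "'f crel \<Rightarrow> ('f \<Rightarrow> 'f set) \<Rightarrow> ('f set \<Rightarrow> 'f set) \<Rightarrow> bool" where
  "setting R ov hat \<longleftrightarrow> (\<forall>\<Gamma> \<gamma>. R \<Gamma> \<gamma> \<longrightarrow> finite \<Gamma>) \<and> hat {} = {} \<and>
      (\<forall>\<Gamma>. finite \<Gamma> \<longrightarrow> finite (hat \<Gamma>))"

definition Arg :: "'f crel \<Rightarrow> 'f set \<Rightarrow> 'f arg set" where
  "Arg R S = {(\<Gamma>, \<gamma>). finite \<Gamma> \<and> \<Gamma> \<subseteq> S \<and> R \<Gamma> \<gamma>}"

definition attacks :: "('f \<Rightarrow> 'f set) \<Rightarrow> ('f set \<Rightarrow> 'f set) \<Rightarrow> 'f arg \<Rightarrow> 'f arg \<Rightarrow> bool" where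
  "attacks ov hat a b \<longleftrightarrow> (\<exists>\<psi>\<in>hat (fst b). snd a \<in> ov \<psi>)"

definition conflict_free :: "('a \<Rightarrow> 'a \<Rightarrow> bool) \<Rightarrow> 'a set \<Rightarrow> bool" where
  "conflict_free att E \<longleftrightarrow> (\<forall>a\<in>E. \<forall>b\<in>E. \<not> att a b)"

definition defends :: "'a set \<Rightarrow> ('a \<Rightarrow> 'a \<Rightarrow> bool) \<Rightarrow> 'a set \<Rightarrow> 'a \<Rightarrow> bool" where
  "defends A att E a \<longleftrightarrow> (\<forall>b\<in>A. att b a \<longrightarrow> (\<exists>c\<in>E. att c b))"

definition complete_ext :: "'a set \<Rightarrow> ('a \<Rightarrow> 'a \<Rightarrow> bool) \<Rightarrow> 'a set \<Rightarrow> bool" where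
  "complete_ext A att E \<longleftrightarrow> E \<subseteq> A \<and> conflict_free att E \<and>
     (\<forall>a\<in>E. defends A att E a) \<and> (\<forall>a\<in>A. defends A att E a \<longrightarrow> a \<in> E)"

definition grounded :: "'a set \<Rightarrow> ('a \<Rightarrow> 'a \<Rightarrow> bool) \<Rightarrow> 'a set" where
  "grounded A att = (THE E. complete_ext A att E \<and> (\<forall>E'. complete_ext A att E' \<longrightarrow> E \<subseteq> E'))"

definition Grd :: "'f crel \<Rightarrow> ('f \<Rightarrow> 'f set) \<Rightarrow> ('f set \<Rightarrow> 'f set) \<Rightarrow> 'f set \<Rightarrow> 'f arg set" where
  "Grd R ov hat S = grounded (Arg R S) (attacks ov hat)"

definition grd_entails :: "'f crel \<Rightarrow> ('f \<Rightarrow> 'f set) \<Rightarrow> ('f set \<Rightarrow> 'f set) \<Rightarrow> 'f set \<Rightarrow> 'f \<Rightarrow> bool" where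
  "grd_entails R ov hat S \<phi> \<longleftrightarrow> (\<exists>a\<in>Grd R ov hat S. snd a = \<phi>)"

end

theory Submission
  imports Defs
begin

text \<open>If \<open>(\<Phi>, \<phi>)\<close> is a grounded argument, then by Cut every argument \<open>(\<Gamma>, \<gamma>)\<close> of the
  enriched relation can be absorbed into the ordinary argument \<open>(\<Gamma> \<union> \<Phi>, \<gamma>)\<close>. Since the hat
  operator is pointed, the attackers of \<open>(\<Gamma> \<union> \<Phi>, \<gamma>)\<close> are those of \<open>(\<Gamma>, \<gamma>)\<close> together with
  those of \<open>(\<Phi>, \<phi>)\<close>, and the latter are already defeated by the grounded extension. Hence
  the two grounded extensions can be compared by induction along their characterisation as
  least fixed points of the characteristic function.\<close>

definition characteristic :: "'a set \<Rightarrow> ('a \<Rightarrow> 'a \<Rightarrow> bool) \<Rightarrow> 'a set \<Rightarrow> 'a set" where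
  "characteristic A att E = {a \<in> A. defends A att E a}"

lemma mono_characteristic: "mono (characteristic A att)"
  unfolding mono_def characteristic_def defends_def by blast

lemma lfp_characteristic_iff:
  "a \<in> lfp (characteristic A att) \<longleftrightarrow> a \<in> A \<and> defends A att (lfp (characteristic A att)) a"
  by (subst lfp_unfold[OF mono_characteristic]) (simp add: characteristic_def)

lemma conflict_free_lfp_characteristic: "conflict_free att (lfp (characteristic A att))"
proof -
  let ?L = "lfp (characteristic A att)"
  let ?unattacked = "{a. \<forall>b\<in>?L. \<not> att b a}"
  have "?L \<subseteq> ?unattacked"
  proof (rule lfp_induct[OF mono_characteristic], rule subsetI)
    fix a assume "a \<in> characteristic A att (?L \<inter> ?unattacked)"
    then have defended: "defends A att (?L \<inter> ?unattacked) a"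
      by (simp add: characteristic_def)
    show "a \<in> ?unattacked"
    proof (intro CollectI ballI notI)
      fix b assume b: "b \<in> ?L" "att b a"
      have "b \<in> A" and b_defended: "defends A att ?L b"
        using b(1) lfp_characteristic_iff[of b A att] by simp_all
      then obtain c where c: "c \<in> ?L" "c \<in> ?unattacked" "att c b"
        using defended b(2) unfolding defends_def by blast
      \<comment> \<open>\<open>?L\<close> defends \<open>b\<close> against \<open>c\<close>, although nothing in \<open>?L\<close> attacks \<open>c\<close>\<close>
      have "c \<in> A"
        using c(1) lfp_characteristic_iff[of c A att] by simp
      then obtain d where "d \<in> ?L" "att d c"
        using b_defended c(3) unfolding defends_def by blast
      then show False
        using c(2) by blast
    qed
  qed
  then show ?thesis
    unfolding conflict_free_def by blast
qed

lemma grounded_eq_lfp: "grounded A att = lfp (characteristic A att)"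
  unfolding grounded_def
proof (rule the_equality)
  have complete: "complete_ext A att (lfp (characteristic A att))"
    unfolding complete_ext_def using conflict_free_lfp_characteristic
    by (auto simp: lfp_characteristic_iff[of _ A att])
  have least: "lfp (characteristic A att) \<subseteq> E" if "complete_ext A att E" for E
    using that by (intro lfp_lowerbound) (auto simp: complete_ext_def characteristic_def)
  show "complete_ext A att (lfp (characteristic A att)) \<and>
      (\<forall>E. complete_ext A att E \<longrightarrow> lfp (characteristic A att) \<subseteq> E)"
    using complete least by blast
  show "E = lfp (characteristic A att)"
    if "complete_ext A att E \<and> (\<forall>E'. complete_ext A att E' \<longrightarrow> E \<subseteq> E')" for E
    using that complete least by blast
qed

lemma grounded_iff: "a \<in> grounded A att \<longleftrightarrow> a \<in> A \<and> defends A att (grounded A att) a"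
  unfolding grounded_eq_lfp by (rule lfp_characteristic_iff)

lemma grounded_subset: "grounded A att \<subseteq> A"
  by (auto simp: grounded_iff[of _ A att])

lemma defended_in_grounded: "a \<in> A \<Longrightarrow> defends A att (grounded A att) a \<Longrightarrow> a \<in> grounded A att"
  by (simp add: grounded_iff[of a])

lemma grounded_defends:
  "a \<in> grounded A att \<Longrightarrow> b \<in> A \<Longrightarrow> att b a \<Longrightarrow> \<exists>c\<in>grounded A att. att c b"
  using grounded_iff[of a A att] unfolding defends_def by simp

lemma grounded_not_attacks: "a \<in> grounded A att \<Longrightarrow> b \<in> grounded A att \<Longrightarrow> \<not> att a b"
  using conflict_free_lfp_characteristic[of att A]
  unfolding grounded_eq_lfp conflict_free_def by blast

lemma grounded_induct:
  assumes "\<And>a. a \<in> A \<Longrightarrow> defends A att (grounded A att \<inter> P) a \<Longrightarrow> a \<in> P"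
  shows "grounded A att \<subseteq> P"
  unfolding grounded_eq_lfp
proof (rule lfp_induct[OF mono_characteristic], rule subsetI)
  fix a assume "a \<in> characteristic A att (lfp (characteristic A att) \<inter> P)"
  then show "a \<in> P"
    using assms unfolding grounded_eq_lfp characteristic_def by blast
qed

text \<open>The framework \<open>A'\<close> extends \<open>A\<close>, and \<open>absorb\<close> turns each argument of \<open>A'\<close> into one of
  \<open>A\<close> with the same conclusion, at the price of additionally being attacked wherever the
  grounded argument \<open>p\<close> is.\<close>

locale grounded_absorption =
  fixes A A' :: "'a set" and att :: "'a \<Rightarrow> 'a \<Rightarrow> bool" and absorb :: "'a \<Rightarrow> 'a" and p :: 'a
  assumes subset_extension: "A \<subseteq> A'"
    and absorb_in: "x \<in> A' \<Longrightarrow> absorb x \<in> A"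
    and p_grounded: "p \<in> grounded A att"
    and attacks_absorb: "att c b \<Longrightarrow> att (absorb c) b"
    and attacked_absorb_iff: "b \<in> A' \<Longrightarrow> att c (absorb b) \<longleftrightarrow> att c b \<or> att c p"
begin

lemma grounded_subset_grounded_extension: "grounded A att \<subseteq> grounded A' att"
proof (rule grounded_induct)
  fix x assume x: "x \<in> A" and defended: "defends A att (grounded A att \<inter> grounded A' att) x"
  have "defends A' att (grounded A' att) x"
    unfolding defends_def
  proof (intro ballI impI)
    fix b assume b: "b \<in> A'" "att b x"
    then obtain c where c: "c \<in> grounded A att" "c \<in> grounded A' att" "att c (absorb b)"
      using defended absorb_in attacks_absorb unfolding defends_def by blast
    have "\<not> att c p"
      using c(1) p_grounded by (rule grounded_not_attacks)
    then show "\<exists>c\<in>grounded A' att. att c b"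
      using c attacked_absorb_iff[OF b(1)] by blast
  qed
  then show "x \<in> grounded A' att"
    using x subset_extension by (blast intro: defended_in_grounded)
qed

lemma absorb_grounded:
  assumes "x \<in> grounded A' att"
  shows "absorb x \<in> grounded A att"
proof -
  have "grounded A' att \<subseteq> {x. absorb x \<in> grounded A att}"
  proof (rule grounded_induct)
    fix x assume x: "x \<in> A'"
      and defended: "defends A' att (grounded A' att \<inter> {x. absorb x \<in> grounded A att}) x"
    have "defends A att (grounded A att) (absorb x)"
      unfolding defends_def
    proof (intro ballI impI)
      fix b assume b: "b \<in> A" "att b (absorb x)"
      then consider "att b x" | "att b p"
        using attacked_absorb_iff[OF x] by blast
      then show "\<exists>c\<in>grounded A att. att c b"
      proof cases
        case 1
        moreover have "b \<in> A'"
          using b(1) subset_extension by blast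
        ultimately obtain c where "absorb c \<in> grounded A att" "att c b"
          using defended unfolding defends_def by blast
        then show ?thesis
          using attacks_absorb by blast
      next
        case 2
        then show ?thesis
          using grounded_defends[OF p_grounded b(1)] by blast
      qed
    qed
    then show "x \<in> {x. absorb x \<in> grounded A att}"
      using absorb_in[OF x] by (simp add: defended_in_grounded)
  qed
  then show ?thesis
    using assms by blast
qed

lemma grounded_extension_Int: "grounded A' att \<inter> A = grounded A att"
proof
  show "grounded A att \<subseteq> grounded A' att \<inter> A"
    using grounded_subset_grounded_extension grounded_subset[of A att] by blast
  show "grounded A' att \<inter> A \<subseteq> grounded A att"
  proof
    fix x assume x: "x \<in> grounded A' att \<inter> A"
    then have "x \<in> A'"
      using subset_extension by blast
    have absorbed: "absorb x \<in> grounded A att"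
      using x absorb_grounded by blast
    have "defends A att (grounded A att) x"
      unfolding defends_def
    proof (intro ballI impI)
      fix b assume "b \<in> A" "att b x"
      then show "\<exists>c\<in>grounded A att. att c b"
        using grounded_defends[OF absorbed] attacked_absorb_iff[OF \<open>x \<in> A'\<close>] by blast
    qed
    then show "x \<in> grounded A att"
      using x by (simp add: defended_in_grounded)
  qed
qed

end

lemma Arg_subset_plus_rel: "Arg R S \<subseteq> Arg (plus_rel R \<phi>) S"
  unfolding Arg_def plus_rel_def by (auto intro: tclos.base)

lemma Arg_cut:
  assumes "cut_prop R" "(\<Phi>, \<phi>) \<in> Arg R S" "(\<Gamma>, \<gamma>) \<in> Arg (plus_rel R \<phi>) S"
  shows "(\<Gamma> \<union> \<Phi>, \<gamma>) \<in> Arg R S"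
proof -
  have "R (\<Phi> \<union> \<Gamma>) \<gamma>"
    using assms unfolding cut_prop_def Arg_def by blast
  then show ?thesis
    using assms(2,3) unfolding Arg_def by (simp add: Un_commute)
qed

lemma attacks_Un_premises:
  assumes "pointed hat" "finite \<Gamma>" "finite \<Phi>"
  shows "attacks ov hat c (\<Gamma> \<union> \<Phi>, \<gamma>) \<longleftrightarrow> attacks ov hat c (\<Gamma>, \<gamma>) \<or> attacks ov hat c (\<Phi>, \<phi>)"
  using assms unfolding attacks_def pointed_def by auto

lemma grounded_absorption_plus_rel:
  assumes "cut_prop R" "pointed hat" "(\<Phi>, \<phi>) \<in> Grd R ov hat S"
  shows "grounded_absorption (Arg R S) (Arg (plus_rel R \<phi>) S) (attacks ov hat)
    (\<lambda>a. (fst a \<union> \<Phi>, snd a)) (\<Phi>, \<phi>)"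
proof
  have \<Phi>: "(\<Phi>, \<phi>) \<in> Arg R S"
    using assms(3) grounded_subset[of "Arg R S" "attacks ov hat"] unfolding Grd_def by blast
  show "Arg R S \<subseteq> Arg (plus_rel R \<phi>) S"
    by (rule Arg_subset_plus_rel)
  show "(fst x \<union> \<Phi>, snd x) \<in> Arg R S" if "x \<in> Arg (plus_rel R \<phi>) S" for x
    using Arg_cut[OF assms(1) \<Phi>, of "fst x" "snd x"] that by simp
  show "(\<Phi>, \<phi>) \<in> grounded (Arg R S) (attacks ov hat)"
    using assms(3) unfolding Grd_def .
  show "attacks ov hat (fst c \<union> \<Phi>, snd c) b" if "attacks ov hat c b" for c b
    using that unfolding attacks_def by simp
  show "attacks ov hat c (fst b \<union> \<Phi>, snd b) \<longleftrightarrow> attacks ov hat c b \<or> attacks ov hat c (\<Phi>, \<phi>)"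
    if "b \<in> Arg (plus_rel R \<phi>) S" for b c
  proof -
    have "finite (fst b)" "finite \<Phi>"
      using that \<Phi> unfolding Arg_def by auto
    then show ?thesis
      using attacks_Un_premises[OF assms(2), of "fst b" \<Phi> ov c "snd b" \<phi>] by simp
  qed
qed

theorem theorem4:
  fixes R :: "'f set \<Rightarrow> 'f \<Rightarrow> bool" and ov :: "'f \<Rightarrow> 'f set" and hat :: "'f set \<Rightarrow> 'f set"
    and S :: "'f set" and \<phi> :: 'f
  assumes "setting R ov hat" and "cut_prop R" and "pointed hat"
    and "grd_entails R ov hat S \<phi>"
  shows "(\<exists>\<Phi>. (\<Phi>, \<phi>) \<in> Grd R ov hat S) \<and>
    Grd R ov hat S \<subseteq> Grd (plus_rel R \<phi>) ov hat S \<and>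
    Grd (plus_rel R \<phi>) ov hat S \<inter> Arg R S = Grd R ov hat S \<and>
    (\<forall>\<Phi>. (\<Phi>, \<phi>) \<in> Grd R ov hat S \<longrightarrow>
           (\<forall>\<Gamma> \<gamma>. (\<Gamma>, \<gamma>) \<in> Grd (plus_rel R \<phi>) ov hat S - Arg R S \<longrightarrow>
              (\<Gamma> \<union> \<Phi>, \<gamma>) \<in> Grd R ov hat S))"
proof -
  obtain \<Phi> where \<Phi>: "(\<Phi>, \<phi>) \<in> Grd R ov hat S"
    using assms(4) unfolding grd_entails_def by (metis prod.collapse)
  interpret grounded_absorption "Arg R S" "Arg (plus_rel R \<phi>) S" "attacks ov hat"
    "\<lambda>a. (fst a \<union> \<Phi>, snd a)" "(\<Phi>, \<phi>)"
    using grounded_absorption_plus_rel[OF assms(2,3) \<Phi>] .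
  have "Grd R ov hat S \<subseteq> Grd (plus_rel R \<phi>) ov hat S"
    using grounded_subset_grounded_extension unfolding Grd_def .
  moreover have "Grd (plus_rel R \<phi>) ov hat S \<inter> Arg R S = Grd R ov hat S"
    using grounded_extension_Int unfolding Grd_def .
  moreover have "(\<Gamma> \<union> \<Phi>', \<gamma>) \<in> Grd R ov hat S"
    if "(\<Phi>', \<phi>) \<in> Grd R ov hat S" "(\<Gamma>, \<gamma>) \<in> Grd (plus_rel R \<phi>) ov hat S" for \<Phi>' \<Gamma> \<gamma>
    using grounded_absorption.absorb_grounded[OF grounded_absorption_plus_rel[OF assms(2,3) that(1)]
        that(2)[unfolded Grd_def]]
    unfolding Grd_def by simp
  ultimately show ?thesis
    using \<Phi> by blast
qed

end
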